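(* Let $L>0$ and consider the sixth-order ODE $$\tfrac12\,\theta=\theta^2\bigl(\theta^{(6)}+\theta\bigr).$$ (i) There is no function $\theta\in C^6([-L,L])$, $\theta\not\equiv0$, solving this ODE on $(-L,L)$ with $\theta(\pm L)=\theta'(\pm L)=\theta''(\pm L)=0$. (ii) There is no $\theta\in C^6(\mathbb{R})$, $\theta\not\equiv 0$, with $\theta,\theta',\dots,\theta^{(5)}$ bounded on $\mathbb{R}$, solving this ODE on $\mathbb{R}$ with $\theta(x)\to0$ as $x\to\pm\infty$.
   Context: This is the profile equation for separable blow-up solutions $u=(T-t)^{-1/2}\theta(x)$ of $u_t=u^2(u_{xxxxxx}+u)$. For non-vanishing solutions one has the first integral $\tfrac12\ln|\theta|=\theta^{(5)}\theta'-\theta^{(4)}\theta''+\tfrac12(\theta'')^2+\tfrac12\theta^2+C$, $C\in\mathbb{R}$ a constant. *)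

theory Defs
  imports "HOL-Analysis.Analysis"
begin

text \<open>C^n regularity on a set S, given by an explicit chain of derivatives:
  D 0 is the function, D (Suc k) is the derivative of D k (taken within S,
  i.e. one-sided at endpoints of a closed interval) for k < n, and D n is continuous on S.\<close>
definition Ck_chain :: "nat \<Rightarrow> real set \<Rightarrow> (nat \<Rightarrow> real \<Rightarrow> real) \<Rightarrow> bool" where
  "Ck_chain n S D \<longleftrightarrow>
     (\<forall>k<n. \<forall>x\<in>S. (D k has_real_derivative D (Suc k) x) (at x within S))
     \<and> continuous_on S (D n)"

end

theory Submission
  imports Defs
begin

(* Wherever the profile \<theta> does not vanish, the
   equation  (1/2) \<theta> = \<theta>^2 (\<theta>^(6) + \<theta>)  can be divided by \<theta>, giving
   \<theta> (\<theta>^(6) + \<theta>) = 1/2.  Hence \<theta> cannot tend to 0 at a point where \<theta>^(6) stays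
   bounded, so the zero set of \<theta> is open as well as closed: on a connected domain a
   nontrivial solution never vanishes (lemma nonvanishing_propagates).
   (i) On [-L,L] this contradicts \<theta>(L) = 0; only continuity of \<theta> and \<theta>^(6) is used.
   (ii) On \<real> the solution has constant sign, and \<theta> \<rightarrow> 0 at +\<infinity> forces
   |\<theta>^(6)| = |1/(2\<theta>) - \<theta>| \<ge> 1 with a fixed sign near +\<infinity>; then \<theta>^(5), whose derivative
   is \<theta>^(6), grows at least linearly, contradicting its boundedness.  The negative case
   reduces to the positive one since the equation is invariant under (\<theta>,\<theta>^(6)) \<mapsto> (-\<theta>,-\<theta>^(6)). *)

lemma Ck_chain_continuous_on:
  assumes "Ck_chain n S D" and "k \<le> n"
  shows "continuous_on S (D k)"
proof (cases "k = n")
  case False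
  with assms have "\<forall>x\<in>S. (D k has_real_derivative D (Suc k) x) (at x within S)"
    unfolding Ck_chain_def by auto
  then show ?thesis by (intro DERIV_continuous_on) auto
qed (use assms in \<open>simp add: Ck_chain_def\<close>)

lemma profile_equation_divided:
  fixes u v :: real
  assumes "u \<noteq> 0" and "1/2 * u = u^2 * (v + u)"
  shows "u * (v + u) = 1/2"
proof -
  have "u * (1/2 - u * (v + u)) = 0"
    using assms(2) by (simp add: power2_eq_square algebra_simps)
  with assms(1) show ?thesis by simp
qed

text \<open>Key lemma: if f (v + f) = 1/2 wherever f does not vanish, with f and v continuous,
  then the nonzero set of f is clopen, so on a connected set f vanishes nowhere
  as soon as it is nonzero at one point.\<close>
lemma nonvanishing_propagates:
  fixes f v :: "real \<Rightarrow> real"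
  assumes S: "connected S" and f: "continuous_on S f" and v: "continuous_on S v"
    and eq: "\<And>y. y \<in> S \<Longrightarrow> f y \<noteq> 0 \<Longrightarrow> f y * (v y + f y) = 1/2"
    and x: "x \<in> S" "f x \<noteq> 0" and z: "z \<in> S"
  shows "f z \<noteq> 0"
proof -
  define T where "T = {y\<in>S. f y \<noteq> 0}"
  have "openin (top_of_set S) (S \<inter> f -` (- {0}))"
    using f by (rule continuous_openin_preimage_gen) auto
  then have open_T: "openin (top_of_set S) T"
    by (simp add: T_def vimage_def Int_def)
  have "a \<in> T" if a: "a islimpt T" "a \<in> S" for a
  proof (rule ccontr)
    assume "a \<notin> T"
    with a have fa: "f a = 0" by (simp add: T_def)
    have nontrivial: "at a within T \<noteq> bot"
      using a(1) trivial_limit_within by blast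
    have "(f \<longlongrightarrow> f a) (at a within T)" "(v \<longlongrightarrow> v a) (at a within T)"
      using f v a(2) by (auto simp: continuous_on_def T_def intro: tendsto_within_subset)
    then have "((\<lambda>y. f y * (v y + f y)) \<longlongrightarrow> f a * (v a + f a)) (at a within T)"
      by (intro tendsto_intros)
    moreover have "eventually (\<lambda>y. f y * (v y + f y) = 1/2) (at a within T)"
      by (auto simp: eventually_at_filter T_def eq)
    ultimately have "((\<lambda>y. 1/2) \<longlongrightarrow> f a * (v a + f a)) (at a within T)"
      by (simp add: tendsto_cong)
    with nontrivial have "1/2 = f a * (v a + f a)"
      by (simp add: tendsto_const_iff)
    with fa show False by simp
  qed
  then have "closedin (top_of_set S) T"
    by (auto simp: closedin_limpt T_def)
  with open_T S have "T = {} \<or> T = S"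
    by (simp add: connected_clopen)
  with x z show ?thesis by (auto simp: T_def)
qed

lemma nonvanishing_constant_sign:
  fixes f :: "real \<Rightarrow> real"
  assumes S: "connected S" and f: "continuous_on S f" and nz: "\<And>y. y \<in> S \<Longrightarrow> f y \<noteq> 0"
    and x: "x \<in> S" "f x > 0" and y: "y \<in> S"
  shows "f y > 0"
proof (rule ccontr)
  assume "\<not> f y > 0"
  then have "f y \<le> 0 \<and> 0 \<le> f x" using x by simp
  moreover have "connected (f ` S)" using f S by (rule connected_continuous_image)
  ultimately have "0 \<in> f ` S"
    using x y by (intro connectedD_interval[of "f ` S" "f y" "f x" 0]) auto
  with nz show False by auto
qed

text \<open>A positive solution tending to 0 at +\<infinity> has v = 1/(2f) - f \<ge> 1 eventually.\<close>
lemma profile_forces_large_derivative: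
  fixes f v :: "real \<Rightarrow> real"
  assumes pos: "\<And>t. f t > 0" and lim: "(f \<longlongrightarrow> 0) at_top"
    and eq: "\<And>t. f t * (v t + f t) = 1/2"
  shows "eventually (\<lambda>t. v t \<ge> 1) at_top"
proof -
  have "eventually (\<lambda>t. f t < 1/4) at_top"
    using lim by (rule order_tendstoD) simp
  then show ?thesis
  proof eventually_elim
    case (elim t)
    have "v t + f t > 2"
    proof (rule ccontr)
      assume "\<not> v t + f t > 2"
      then have "f t * (v t + f t) \<le> f t * 2"
        using pos[of t] by (intro mult_left_mono) auto
      with eq[of t] elim show False by linarith
    qed
    with elim show ?case by linarith
  qed
qed

lemma derivative_ge_one_unbounded:
  fixes h h' :: "real \<Rightarrow> real"
  assumes der: "\<And>x. (h has_real_derivative h' x) (at x)"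
    and large: "eventually (\<lambda>t. h' t \<ge> 1) at_top"
  shows "\<not> bounded (range h)"
proof
  assume "bounded (range h)"
  then obtain B where B: "\<And>y. \<bar>h y\<bar> \<le> B" unfolding bounded_real by blast
  obtain X where X: "\<And>t. t \<ge> X \<Longrightarrow> h' t \<ge> 1"
    using large by (auto simp: eventually_at_top_linorder)
  define y where "y = X + 2 * B + 1"
  have "B \<ge> 0" using B[of 0] by linarith
  then have Xy: "X \<le> y" by (simp add: y_def)
  have "h X - X \<le> h y - y"
  proof (rule DERIV_nonneg_imp_nondecreasing[OF Xy])
    fix t assume "X \<le> t"
    then show "\<exists>d. ((\<lambda>t. h t - t) has_real_derivative d) (at t) \<and> d \<ge> 0"
      using X[of t] by (intro exI[of _ "h' t - 1"]) (auto intro!: derivative_eq_intros der)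
  qed
  with B[of X] B[of y] show False by (simp add: y_def)
qed

text \<open>Part (i): no nontrivial C^6 solution on [-L,L] vanishes at both endpoints.\<close>
lemma no_solution_on_interval:
  fixes L :: real and D :: "nat \<Rightarrow> real \<Rightarrow> real"
  assumes ck: "Ck_chain 6 {-L..L} D" and x: "x \<in> {-L..L}" "D 0 x \<noteq> 0"
    and eq: "\<forall>y\<in>{-L<..<L}. (1/2) * D 0 y = (D 0 y)^2 * (D 6 y + D 0 y)"
    and bdry: "D 0 L = 0" "D 0 (-L) = 0"
  shows False
proof -
  have prod: "D 0 y * (D 6 y + D 0 y) = 1/2" if "y \<in> {-L..L}" "D 0 y \<noteq> 0" for y
  proof -
    from that bdry have "y \<in> {-L<..<L}" by (auto simp: less_le)
    with eq that(2) show ?thesis by (simp add: profile_equation_divided)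
  qed
  have "L \<in> {-L..L}" using x by simp
  with prod x have "D 0 L \<noteq> 0"
    by (intro nonvanishing_propagates[of "{-L..L}" "D 0" "D 6" x L]
        Ck_chain_continuous_on[OF ck]) auto
  with bdry show False by simp
qed

text \<open>Part (ii): a nontrivial C^6 solution on the real line cannot tend to 0 at +\<infinity>
  while its fifth derivative stays bounded.\<close>
lemma no_decaying_solution_on_line:
  fixes D :: "nat \<Rightarrow> real \<Rightarrow> real"
  assumes ck: "Ck_chain 6 UNIV D" and x: "D 0 x \<noteq> 0"
    and bounded5: "bounded (range (D 5))"
    and eq: "\<forall>y. (1/2) * D 0 y = (D 0 y)^2 * (D 6 y + D 0 y)"
    and lim: "(D 0 \<longlongrightarrow> 0) at_top"
  shows False
proof -
  have cont0: "continuous_on UNIV (D 0)" and cont6: "continuous_on UNIV (D 6)"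
    by (rule Ck_chain_continuous_on[OF ck]; simp)+
  have der5: "(D 5 has_real_derivative D 6 t) (at t)" for t
    using ck unfolding Ck_chain_def by (auto dest: spec[of _ 5])
  have prod_if: "D 0 y * (D 6 y + D 0 y) = 1/2" if "D 0 y \<noteq> 0" for y
    using that eq by (simp add: profile_equation_divided)
  have nz: "D 0 y \<noteq> 0" for y
    by (rule nonvanishing_propagates[OF connected_UNIV cont0 cont6 prod_if _ x]) auto
  have prod: "D 0 t * (D 6 t + D 0 t) = 1/2" for t
    using nz by (rule prod_if)
  have "(\<forall>t. D 0 t > 0) \<or> (\<forall>t. - D 0 t > 0)"
  proof (cases "D 0 x > 0")
    case True
    then show ?thesis
      using nonvanishing_constant_sign[OF connected_UNIV cont0 nz] by blast
  next
    case False
    with x have "- D 0 x > 0" by simp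
    then show ?thesis
      using nonvanishing_constant_sign[OF connected_UNIV continuous_on_minus[OF cont0], of x] nz
      by auto
  qed
  then show False
  proof
    assume "\<forall>t. D 0 t > 0"
    with lim prod have "eventually (\<lambda>t. D 6 t \<ge> 1) at_top"
      by (intro profile_forces_large_derivative) auto
    with der5 bounded5 show False
      using derivative_ge_one_unbounded by blast
  next
    assume neg: "\<forall>t. - D 0 t > 0"
    from lim have "((\<lambda>t. - D 0 t) \<longlongrightarrow> 0) at_top"
      using tendsto_minus by fastforce
    with neg prod have "eventually (\<lambda>t. - D 6 t \<ge> 1) at_top"
      by (intro profile_forces_large_derivative[where v = "\<lambda>t. - D 6 t"])
        (auto simp: algebra_simps)
    moreover have "((\<lambda>t. - D 5 t) has_real_derivative - D 6 t) (at t)" for t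
      using der5 by (rule DERIV_minus)
    ultimately have "\<not> bounded (range (\<lambda>t. - D 5 t))"
      by (rule derivative_ge_one_unbounded[rotated])
    with bounded5 show False
      by (simp add: bounded_minus_comp)
  qed
qed

theorem mainTheorem2:
  fixes L :: real
  assumes "L > 0"
  shows "\<not> (\<exists>D. Ck_chain 6 {-L..L} D
               \<and> (\<exists>x\<in>{-L..L}. D 0 x \<noteq> 0)
               \<and> (\<forall>x\<in>{-L<..<L}. (1/2) * D 0 x = (D 0 x)^2 * (D 6 x + D 0 x))
               \<and> D 0 L = 0 \<and> D 0 (-L) = 0
               \<and> D 1 L = 0 \<and> D 1 (-L) = 0
               \<and> D 2 L = 0 \<and> D 2 (-L) = 0)
       \<and> \<not> (\<exists>D. Ck_chain 6 UNIV D
               \<and> (\<exists>x. D 0 x \<noteq> 0)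
               \<and> (\<forall>k\<le>5. bounded (range (D k)))
               \<and> (\<forall>x. (1/2) * D 0 x = (D 0 x)^2 * (D 6 x + D 0 x))
               \<and> (D 0 \<longlongrightarrow> 0) at_top \<and> (D 0 \<longlongrightarrow> 0) at_bot)"
proof (intro conjI notI; elim exE conjE bexE)
  fix D x
  assume "Ck_chain 6 {-L..L} D" "x \<in> {-L..L}" "D 0 x \<noteq> 0"
    "\<forall>y\<in>{-L<..<L}. (1/2) * D 0 y = (D 0 y)^2 * (D 6 y + D 0 y)" "D 0 L = 0" "D 0 (-L) = 0"
  then show False by (rule no_solution_on_interval)
next
  fix D x
  assume "Ck_chain 6 UNIV D" "D 0 x \<noteq> 0" "\<forall>k\<le>5. bounded (range (D k))"
    "\<forall>y. (1/2) * D 0 y = (D 0 y)^2 * (D 6 y + D 0 y)" "(D 0 \<longlongrightarrow> 0) at_top"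
  then show False by (intro no_decaying_solution_on_line[of D x]) auto
qed

end
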